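(* Let $a>0$ and let $L_2=a\mathbb{Z}^3\cup a(\mathbb{Z}+\tfrac12)^3\cup W$. The Voronoi cell of the origin with respect to $L_2$ is the tetrakis hexahedron $$\operatorname{conv}\Big(\{(\pm\tfrac{5a}{24},\pm\tfrac{5a}{24},\pm\tfrac{5a}{24})\}\cup\{(\pm\tfrac{5a}{16},0,0),(0,\pm\tfrac{5a}{16},0),(0,0,\pm\tfrac{5a}{16})\}\Big).$$ This is the cube $[-5a/24,5a/24]^3$ with a square pyramid of height $5a/48$ glued onto each of its six faces. Its volume is $$V^{(2)}_\Gamma=\frac{125}{1152}a^3 .$$ The same holds, after translation, for the Voronoi cell of every point of $a\mathbb{Z}^3\cup a(\mathbb{Z}+\tfrac12)^3$ with respect to $L_2$.
   Context: Fix $a>0$. $W\subset\mathbb{R}^3$ is the set of all points $a(u_1,u_2,u_3)$ such that $(u_1,u_2,u_3)$ is a permutation of a triple $(i,\ j+\tfrac12,\ k+\varepsilon)$ with $i,j,k\in\mathbb{Z}$ and $\varepsilon\in\{\tfrac14,\tfrac34\}$. For a discrete set $P\subset\mathbb{R}^3$ and $p\in P$, the Voronoi cell of $p$ with respect to $P$ is $\{x\in\mathbb{R}^3: |x-p|\le|x-q|\ \text{for all } q\in P\}$. *)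

theory Defs
  imports "HOL-Analysis.Analysis"
begin

definition pt3 :: "real \<Rightarrow> real \<Rightarrow> real \<Rightarrow> real^3" where
  "pt3 x y z = vector [x, y, z]"

definition voronoi_cell :: "(real^3) set \<Rightarrow> real^3 \<Rightarrow> (real^3) set" where
  "voronoi_cell P p = {x. \<forall>q\<in>P. dist x p \<le> dist x q}"

definition cubic_lattice :: "real \<Rightarrow> (real^3) set" where
  "cubic_lattice a = {a *\<^sub>R pt3 (of_int i) (of_int j) (of_int k) | i j k. True}"

definition shifted_lattice :: "real \<Rightarrow> (real^3) set" where
  "shifted_lattice a =
     {a *\<^sub>R pt3 (of_int i + 1/2) (of_int j + 1/2) (of_int k + 1/2) | i j k. True}"

definition W_set :: "real \<Rightarrow> (real^3) set" where
  "W_set a = {a *\<^sub>R pt3 u1 u2 u3 | u1 u2 u3. \<exists>(i::int) (j::int) (k::int) (e::real).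
      e \<in> {1/4, 3/4} \<and>
      (let x = of_int i; y = of_int j + 1/2; z = of_int k + e in
        (u1, u2, u3) \<in> {(x,y,z), (x,z,y), (y,x,z), (y,z,x), (z,x,y), (z,y,x)})}"

definition L2 :: "real \<Rightarrow> (real^3) set" where
  "L2 a = cubic_lattice a \<union> shifted_lattice a \<union> W_set a"

definition cube_vertices :: "real \<Rightarrow> (real^3) set" where
  "cube_vertices a = {pt3 (s1 * (5*a/24)) (s2 * (5*a/24)) (s3 * (5*a/24)) | s1 s2 s3.
      s1 \<in> {-1, 1} \<and> s2 \<in> {-1, 1} \<and> s3 \<in> {-1, 1}}"

definition apex_vertices :: "real \<Rightarrow> (real^3) set" where
  "apex_vertices a = {pt3 (5*a/16) 0 0, pt3 (-(5*a/16)) 0 0,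
                      pt3 0 (5*a/16) 0, pt3 0 (-(5*a/16)) 0,
                      pt3 0 0 (5*a/16), pt3 0 0 (-(5*a/16))}"

definition tetrakis :: "real \<Rightarrow> (real^3) set" where
  "tetrakis a = convex hull (cube_vertices a \<union> apex_vertices a)"

definition central_cube :: "real \<Rightarrow> (real^3) set" where
  "central_cube a = {x. \<forall>i. \<bar>x $ i\<bar> \<le> 5*a/24}"

text \<open>Square pyramid over the face of the cube facing apex c: the convex hull of c
  and the four cube vertices v with v \<bullet> c > 0 (i.e. the vertices of that face).
  The apex lies at distance 5a/16 - 5a/24 = 5a/48 from the face.\<close>
definition pyramid :: "real \<Rightarrow> real^3 \<Rightarrow> (real^3) set" where
  "pyramid a c = convex hull (insert c {v \<in> cube_vertices a. v \<bullet> c > 0})"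

end

theory Submission
  imports Defs
begin

text \<open>Write the points of \<open>L\<^sub>2\<close> as \<open>a u\<close>: the coordinates of \<open>u\<close> lie in \<open>\<int>\<close>, \<open>\<int> + 1/2\<close> or
  \<open>\<int> \<plusminus> 1/4\<close>, in the patterns \<open>\<int>\<^sup>3\<close>, \<open>(\<int> + 1/2)\<^sup>3\<close> or a permutation of
  \<open>(\<int>, \<int> + 1/2, \<int> \<plusminus> 1/4)\<close>. The points \<open>(\<plusminus>a/2, \<plusminus>a/4, 0)\<close> of \<open>W\<close> and their
  permutations force \<open>2|x\<^sub>i| + |x\<^sub>j| \<le> 5a/8\<close> (\<open>i \<noteq> j\<close>) on the Voronoi cell of the origin.
  Conversely, a lower bound for \<open>t\<^sup>2 - 2ct\<close> on each residue class shows that these inequalities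
  imply \<open>2 q \<bullet> x \<le> q \<bullet> q\<close> for all \<open>q \<in> L\<^sub>2\<close>. The polytope they define contains the 14 vertices,
  and sorting its points by their largest coordinate exhibits it as the cube with six pyramids.
  Its part in the cone \<open>|x\<^sub>2|, |x\<^sub>3| \<le> x\<^sub>1\<close> is a scaled copy of the corresponding piece of
  \<open>[-1,1]\<^sup>3\<close> (volume \<open>4/3\<close>) plus an affine image of it, so the volume is \<open>6 \<cdot> 2b\<^sup>3 = 125a\<^sup>3/1152\<close>
  with \<open>b = 5a/24\<close>. Finally, \<open>L\<^sub>2\<close> is invariant under translation by \<open>a\<int>\<^sup>3 \<union> a(\<int> + 1/2)\<^sup>3\<close>,
  which carries the cell of the origin to the cell of any lattice point.\<close>

section \<open>Voronoi cells\<close>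

lemma dist_le_dist_iff_inner:
  fixes x p q :: "'a::real_inner"
  shows "dist x p \<le> dist x q \<longleftrightarrow> 2 * ((q - p) \<bullet> x) \<le> q \<bullet> q - p \<bullet> p"
proof -
  have "dist x p \<le> dist x q \<longleftrightarrow> (x - p) \<bullet> (x - p) \<le> (x - q) \<bullet> (x - q)"
    by (simp add: dist_norm norm_le)
  also have "\<dots> \<longleftrightarrow> 2 * ((q - p) \<bullet> x) \<le> q \<bullet> q - p \<bullet> p"
    by (simp add: inner_diff inner_commute algebra_simps)
  finally show ?thesis .
qed

lemma convex_voronoi_cell: "convex (voronoi_cell P p)"
proof -
  have "voronoi_cell P p = (\<Inter>q\<in>P. {x. (2 *\<^sub>R (q - p)) \<bullet> x \<le> q \<bullet> q - p \<bullet> p})"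
    unfolding voronoi_cell_def dist_le_dist_iff_inner by auto
  then show ?thesis
    by (simp only:) (intro convex_INT convex_halfspace_le)
qed

lemma mem_voronoi_cell_0_iff: "x \<in> voronoi_cell P 0 \<longleftrightarrow> (\<forall>q\<in>P. 2 * (q \<bullet> x) \<le> q \<bullet> q)"
  unfolding voronoi_cell_def dist_le_dist_iff_inner by simp

lemma voronoi_cell_translate:
  assumes "\<And>q. q \<in> P \<Longrightarrow> q + p \<in> P" and "\<And>q. q \<in> P \<Longrightarrow> q - p \<in> P"
  shows "voronoi_cell P p = (\<lambda>x. p + x) ` voronoi_cell P 0"
proof -
  have P: "(\<lambda>q. q - p) ` P = P"
  proof
    show "(\<lambda>q. q - p) ` P \<subseteq> P" using assms(2) by blast
    show "P \<subseteq> (\<lambda>q. q - p) ` P"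
    proof
      fix q assume "q \<in> P"
      then have "q + p \<in> P" by (rule assms(1))
      then show "q \<in> (\<lambda>q. q - p) ` P" by (rule rev_image_eqI) simp
    qed
  qed
  have cell_iff: "x \<in> voronoi_cell P p \<longleftrightarrow> x - p \<in> voronoi_cell P 0" for x
  proof -
    have "x \<in> voronoi_cell P p \<longleftrightarrow> (\<forall>q\<in>P. dist (x - p) 0 \<le> dist (x - p) (q - p))"
      unfolding voronoi_cell_def by (simp add: dist_norm)
    also have "\<dots> \<longleftrightarrow> (\<forall>q\<in>(\<lambda>q. q - p) ` P. dist (x - p) 0 \<le> dist (x - p) q)"
      by simp
    finally show ?thesis
      unfolding P voronoi_cell_def by simp
  qed
  show ?thesis
  proof (intro set_eqI iffI)
    fix x assume "x \<in> voronoi_cell P p"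
    then have "x - p \<in> voronoi_cell P 0" by (simp add: cell_iff)
    then show "x \<in> (\<lambda>x. p + x) ` voronoi_cell P 0" by (rule rev_image_eqI) simp
  next
    fix x assume "x \<in> (\<lambda>x. p + x) ` voronoi_cell P 0"
    then show "x \<in> voronoi_cell P p" by (auto simp: cell_iff)
  qed
qed

section \<open>The point set in coordinates\<close>

lemma pt3_nth [simp]: "pt3 x y z $ 1 = x" "pt3 x y z $ 2 = y" "pt3 x y z $ 3 = z"
  by (simp_all add: pt3_def)

lemma pt3_components: "v = pt3 (v$1) (v$2) (v$3)"
  by (simp add: vec_eq_iff forall_3)

lemma pt3_inject [simp]: "pt3 x y z = pt3 x' y' z' \<longleftrightarrow> x = x' \<and> y = y' \<and> z = z'"
  by (auto simp: vec_eq_iff forall_3)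

lemma pt3_scaleR [simp]: "c *\<^sub>R pt3 x y z = pt3 (c*x) (c*y) (c*z)"
  by (simp add: vec_eq_iff forall_3)

lemma pt3_add [simp]: "pt3 x y z + pt3 x' y' z' = pt3 (x+x') (y+y') (z+z')"
  by (simp add: vec_eq_iff forall_3)

lemma pt3_uminus [simp]: "- pt3 x y z = pt3 (-x) (-y) (-z)"
  by (simp add: vec_eq_iff forall_3)

lemma inner_vec3: "(u::real^3) \<bullet> v = u$1 * v$1 + u$2 * v$2 + u$3 * v$3"
  by (simp add: inner_vec_def sum_3)

definition half_int :: "real \<Rightarrow> bool" where
  "half_int t \<longleftrightarrow> t - 1/2 \<in> \<int>"

definition odd_quarter :: "real \<Rightarrow> bool" where
  "odd_quarter t \<longleftrightarrow> t - 1/4 \<in> \<int> \<or> t - 3/4 \<in> \<int>"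

lemma Ints_iff_ex: "t \<in> \<int> \<longleftrightarrow> (\<exists>i. t = of_int i)"
  by (auto elim: Ints_cases)

lemma half_int_iff_ex: "half_int t \<longleftrightarrow> (\<exists>j. t = of_int j + 1/2)"
  unfolding half_int_def Ints_iff_ex by (auto simp: algebra_simps)

lemma odd_quarter_iff_ex: "odd_quarter t \<longleftrightarrow> (\<exists>k e. e \<in> {1/4, 3/4} \<and> t = of_int k + e)"
proof -
  have "(\<exists>k e. e \<in> {1/4, 3/4} \<and> t = of_int k + e)
      \<longleftrightarrow> (\<exists>k. t = of_int k + 1/4) \<or> (\<exists>k. t = of_int k + 3/4)"
    by blast
  then show ?thesis
    unfolding odd_quarter_def Ints_iff_ex by (metis diff_eq_eq)
qed

definition W_coords :: "real \<Rightarrow> real \<Rightarrow> real \<Rightarrow> bool" where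
  "W_coords u1 u2 u3 \<longleftrightarrow>
       (u1 \<in> \<int> \<and> half_int u2 \<and> odd_quarter u3) \<or> (u1 \<in> \<int> \<and> odd_quarter u2 \<and> half_int u3)
     \<or> (half_int u1 \<and> u2 \<in> \<int> \<and> odd_quarter u3) \<or> (half_int u1 \<and> odd_quarter u2 \<and> u3 \<in> \<int>)
     \<or> (odd_quarter u1 \<and> u2 \<in> \<int> \<and> half_int u3) \<or> (odd_quarter u1 \<and> half_int u2 \<and> u3 \<in> \<int>)"

definition lattice_coords :: "real \<Rightarrow> real \<Rightarrow> real \<Rightarrow> bool" where
  "lattice_coords u1 u2 u3 \<longleftrightarrow>
     (u1 \<in> \<int> \<and> u2 \<in> \<int> \<and> u3 \<in> \<int>) \<or> (half_int u1 \<and> half_int u2 \<and> half_int u3)"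

definition L2_coords :: "real \<Rightarrow> real \<Rightarrow> real \<Rightarrow> bool" where
  "L2_coords u1 u2 u3 \<longleftrightarrow> lattice_coords u1 u2 u3 \<or> W_coords u1 u2 u3"

lemma W_set_eq: "W_set a = {a *\<^sub>R pt3 u1 u2 u3 | u1 u2 u3. W_coords u1 u2 u3}"
proof -
  have "(\<exists>(i::int) (j::int) (k::int) (e::real). e \<in> {1/4, 3/4} \<and>
      (let x = of_int i; y = of_int j + 1/2; z = of_int k + e in
        (u1, u2, u3) \<in> {(x,y,z), (x,z,y), (y,x,z), (y,z,x), (z,x,y), (z,y,x)}))
    \<longleftrightarrow> (\<exists>x y z. x \<in> \<int> \<and> half_int y \<and> odd_quarter z \<and>
        (u1, u2, u3) \<in> {(x,y,z), (x,z,y), (y,x,z), (y,z,x), (z,x,y), (z,y,x)})"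
    for u1 u2 u3
    unfolding Ints_iff_ex half_int_iff_ex odd_quarter_iff_ex Let_def by blast
  also have "\<dots> u1 u2 u3 \<longleftrightarrow> W_coords u1 u2 u3" for u1 u2 u3
    unfolding W_coords_def by blast
  finally show ?thesis
    unfolding W_set_def by simp
qed

lemma lattice_eq:
  "cubic_lattice a \<union> shifted_lattice a = {a *\<^sub>R pt3 u1 u2 u3 | u1 u2 u3. lattice_coords u1 u2 u3}"
  unfolding cubic_lattice_def shifted_lattice_def lattice_coords_def Ints_iff_ex half_int_iff_ex
  by blast

lemma L2_eq: "L2 a = {a *\<^sub>R pt3 u1 u2 u3 | u1 u2 u3. L2_coords u1 u2 u3}"
  unfolding L2_def L2_coords_def W_set_eq Un_assoc[symmetric] lattice_eq by blast

lemma coord_classes_add_Int: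
  assumes "b \<in> \<int>"
  shows "a + b \<in> \<int> \<longleftrightarrow> a \<in> \<int>" "half_int (a + b) \<longleftrightarrow> half_int a"
    "odd_quarter (a + b) \<longleftrightarrow> odd_quarter a"
proof -
  have shift: "x + b \<in> \<int> \<longleftrightarrow> x \<in> \<int>" for x
    using assms by (rule add_in_Ints_iff_right)
  show "a + b \<in> \<int> \<longleftrightarrow> a \<in> \<int>" by (rule shift)
  show "half_int (a + b) \<longleftrightarrow> half_int a"
    using shift[of "a - 1/2"] by (simp add: half_int_def algebra_simps)
  show "odd_quarter (a + b) \<longleftrightarrow> odd_quarter a"
    using shift[of "a - 1/4"] shift[of "a - 3/4"] by (simp add: odd_quarter_def algebra_simps)
qed

lemma coord_classes_add_half_int:
  assumes "half_int b"
  shows "a + b \<in> \<int> \<longleftrightarrow> half_int a" "half_int (a + b) \<longleftrightarrow> a \<in> \<int>"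
    "odd_quarter (a + b) \<longleftrightarrow> odd_quarter a"
proof -
  have b: "b - 1/2 \<in> \<int>" using assms by (simp add: half_int_def)
  have shift: "x + (b - 1/2) \<in> \<int> \<longleftrightarrow> x \<in> \<int>" for x
    using b by (rule add_in_Ints_iff_right)
  have one: "x + 1 \<in> \<int> \<longleftrightarrow> x \<in> \<int>" for x :: real
    by (simp add: add_in_Ints_iff_right)
  show "a + b \<in> \<int> \<longleftrightarrow> half_int a"
    using shift[of "a + 1/2"] one[of "a - 1/2"] by (simp add: half_int_def algebra_simps)
  show "half_int (a + b) \<longleftrightarrow> a \<in> \<int>"
    using shift[of a] by (simp add: half_int_def algebra_simps)
  show "odd_quarter (a + b) \<longleftrightarrow> odd_quarter a"
    using shift[of "a - 3/4 + 1"] shift[of "a - 1/4"] one[of "a - 3/4"]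
    by (simp add: odd_quarter_def algebra_simps) blast
qed

lemma L2_coords_add_lattice_coords:
  assumes "lattice_coords v1 v2 v3" "L2_coords u1 u2 u3"
  shows "L2_coords (u1 + v1) (u2 + v2) (u3 + v3)"
  using assms(1) unfolding lattice_coords_def
proof (elim disjE conjE)
  assume "v1 \<in> \<int>" "v2 \<in> \<int>" "v3 \<in> \<int>"
  then show ?thesis
    using assms(2) by (simp only: L2_coords_def lattice_coords_def W_coords_def coord_classes_add_Int)
next
  assume "half_int v1" "half_int v2" "half_int v3"
  then show ?thesis
    \<comment> \<open>the shift swaps the classes \<open>\<int>\<close> and \<open>\<int> + 1/2\<close>, which permutes the disjuncts\<close>
    using assms(2) unfolding L2_coords_def lattice_coords_def W_coords_def
    by (simp only: coord_classes_add_half_int) argo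
qed

lemma lattice_coords_uminus:
  assumes "lattice_coords u1 u2 u3"
  shows "lattice_coords (-u1) (-u2) (-u3)"
proof -
  have "half_int (-t)" if "half_int t" for t
  proof -
    have "-t - 1/2 = -(t - 1/2) - 1" by simp
    then show ?thesis using that unfolding half_int_def by (metis Ints_1 Ints_diff Ints_minus)
  qed
  then show ?thesis using assms unfolding lattice_coords_def by auto
qed

lemma L2_add_lattice:
  assumes "p \<in> cubic_lattice a \<union> shifted_lattice a" "q \<in> L2 a"
  shows "q + p \<in> L2 a"
proof -
  obtain v1 v2 v3 where p: "p = a *\<^sub>R pt3 v1 v2 v3" and v: "lattice_coords v1 v2 v3"
    using assms(1) unfolding lattice_eq by blast
  obtain u1 u2 u3 where q: "q = a *\<^sub>R pt3 u1 u2 u3" and u: "L2_coords u1 u2 u3"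
    using assms(2) unfolding L2_eq by blast
  have "q + p = a *\<^sub>R pt3 (u1 + v1) (u2 + v2) (u3 + v3)"
    by (simp add: p q algebra_simps)
  then show ?thesis
    unfolding L2_eq using L2_coords_add_lattice_coords[OF v u] by blast
qed

lemma lattice_uminus:
  assumes "p \<in> cubic_lattice a \<union> shifted_lattice a"
  shows "-p \<in> cubic_lattice a \<union> shifted_lattice a"
proof -
  obtain v1 v2 v3 where "p = a *\<^sub>R pt3 v1 v2 v3" and "lattice_coords v1 v2 v3"
    using assms unfolding lattice_eq by blast
  then have "-p = a *\<^sub>R pt3 (-v1) (-v2) (-v3)" and "lattice_coords (-v1) (-v2) (-v3)"
    by (simp_all add: lattice_coords_uminus)
  then show ?thesis unfolding lattice_eq by blast
qed

section \<open>The cell of the origin as an intersection of half-spaces\<close>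

lemma Ints_abs_cases: "(t::real) \<in> \<int> \<Longrightarrow> t = 0 \<or> \<bar>t\<bar> \<ge> 1"
proof (elim Ints_cases)
  fix i :: int assume "t = of_int i"
  moreover have "i = 0 \<or> \<bar>i\<bar> \<ge> 1" by linarith
  ultimately show ?thesis by (metis of_int_0 of_int_1_le_iff of_int_abs)
qed

lemma half_int_abs_ge: "half_int t \<Longrightarrow> \<bar>t\<bar> \<ge> 1/2"
  unfolding half_int_iff_ex
proof (elim exE)
  fix j :: int assume t: "t = of_int j + 1/2"
  consider "j \<ge> 0" | "j \<le> -1" by linarith
  then show ?thesis
  proof cases
    case 1 then show ?thesis using t by simp
  next
    case 2 then have "real_of_int j \<le> -1" by simp
    then show ?thesis using t by simp
  qed
qed

lemma odd_quarter_abs_cases: "odd_quarter t \<Longrightarrow> \<bar>t\<bar> = 1/4 \<or> \<bar>t\<bar> \<ge> 3/4"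
  unfolding odd_quarter_iff_ex
proof (elim exE conjE)
  fix k :: int and e :: real assume e: "e \<in> {1/4, 3/4}" and t: "t = of_int k + e"
  have "k \<ge> 1 \<or> k = 0 \<or> k = -1 \<or> k \<le> -2" by linarith
  then have "real_of_int k \<ge> 1 \<or> k = 0 \<or> k = -1 \<or> real_of_int k \<le> -2" by auto
  then show ?thesis using e t by auto
qed

lemma linear_le_abs_mult: "c * t \<le> \<bar>c\<bar> * \<bar>t\<bar>" for c t :: real
  by (metis abs_ge_self abs_mult)

lemma Ints_linear_le_square:
  fixes c t :: real
  assumes "t \<in> \<int>" "\<bar>c\<bar> \<le> 1/2"
  shows "2 * (c * t) \<le> t^2"
proof (cases "t = 0")
  case False
  then have "\<bar>t\<bar> \<ge> 1" using Ints_abs_cases[OF assms(1)] by auto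
  then have "\<bar>t\<bar> * (\<bar>t\<bar> - 2 * \<bar>c\<bar>) \<ge> 0" using assms(2) by simp
  then show ?thesis using linear_le_abs_mult[of c t] by (simp add: algebra_simps power2_eq_square)
qed simp

lemma half_int_linear_le_square:
  assumes "half_int t" "\<bar>c\<bar> \<le> 1/2"
  shows "2 * (c * t) \<le> t^2 - 1/4 + \<bar>c\<bar>"
proof -
  have "(\<bar>t\<bar> - 1/2) * (\<bar>t\<bar> + 1/2 - 2 * \<bar>c\<bar>) \<ge> 0"
    using half_int_abs_ge[OF assms(1)] assms(2) by simp
  then show ?thesis using linear_le_abs_mult[of c t] by (simp add: algebra_simps power2_eq_square)
qed

lemma odd_quarter_linear_le_square:
  assumes "odd_quarter t" "\<bar>c\<bar> \<le> 1/2"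
  shows "2 * (c * t) \<le> t^2 - 1/16 + \<bar>c\<bar>/2"
proof -
  have "(\<bar>t\<bar> - 1/4) * (\<bar>t\<bar> + 1/4 - 2 * \<bar>c\<bar>) \<ge> 0"
    using odd_quarter_abs_cases[OF assms(1)]
  proof
    assume "\<bar>t\<bar> = 1/4"
    then have "\<bar>t\<bar> - 1/4 = 0" by simp
    then show ?thesis by (simp only: mult_zero_left order_refl)
  qed (use assms(2) in simp)
  then show ?thesis using linear_le_abs_mult[of c t] by (simp add: algebra_simps power2_eq_square)
qed

definition tetrakis_halfspaces :: "real \<Rightarrow> (real^3) set" where
  "tetrakis_halfspaces a = {x. \<forall>i j. i \<noteq> j \<longrightarrow> 2 * \<bar>x$i\<bar> + \<bar>x$j\<bar> \<le> 5*a/8}"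

lemma mem_tetrakis_halfspaces_iff:
  "x \<in> tetrakis_halfspaces a \<longleftrightarrow>
     2*\<bar>x$1\<bar> + \<bar>x$2\<bar> \<le> 5*a/8 \<and> 2*\<bar>x$1\<bar> + \<bar>x$3\<bar> \<le> 5*a/8 \<and> 2*\<bar>x$2\<bar> + \<bar>x$1\<bar> \<le> 5*a/8 \<and>
     2*\<bar>x$2\<bar> + \<bar>x$3\<bar> \<le> 5*a/8 \<and> 2*\<bar>x$3\<bar> + \<bar>x$1\<bar> \<le> 5*a/8 \<and> 2*\<bar>x$3\<bar> + \<bar>x$2\<bar> \<le> 5*a/8"
  unfolding tetrakis_halfspaces_def by (auto simp: forall_3)

text \<open>Adding the bounds of the three residue classes, a point of \<open>W\<close> needs exactly one of the
  inequalities \<open>|c\<^sub>i| + |c\<^sub>j|/2 \<le> 5/16\<close>, and a point of the shifted lattice the sum of three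
  of them.\<close>
lemma L2_coords_inner_le:
  assumes u: "L2_coords u1 u2 u3" and c: "pt3 c1 c2 c3 \<in> tetrakis_halfspaces 1"
  shows "2 * (c1*u1 + c2*u2 + c3*u3) \<le> u1^2 + u2^2 + u3^2"
proof -
  have pairs: "\<bar>c1\<bar> + \<bar>c2\<bar>/2 \<le> 5/16" "\<bar>c1\<bar> + \<bar>c3\<bar>/2 \<le> 5/16" "\<bar>c2\<bar> + \<bar>c1\<bar>/2 \<le> 5/16"
    "\<bar>c2\<bar> + \<bar>c3\<bar>/2 \<le> 5/16" "\<bar>c3\<bar> + \<bar>c1\<bar>/2 \<le> 5/16" "\<bar>c3\<bar> + \<bar>c2\<bar>/2 \<le> 5/16"
    using c unfolding mem_tetrakis_halfspaces_iff by auto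
  then have small: "\<bar>c1\<bar> \<le> 1/2" "\<bar>c2\<bar> \<le> 1/2" "\<bar>c3\<bar> \<le> 1/2" by linarith+
  note I = Ints_linear_le_square[OF _ small(1)] Ints_linear_le_square[OF _ small(2)]
    Ints_linear_le_square[OF _ small(3)]
  note H = half_int_linear_le_square[OF _ small(1)] half_int_linear_le_square[OF _ small(2)]
    half_int_linear_le_square[OF _ small(3)]
  note Q = odd_quarter_linear_le_square[OF _ small(1)] odd_quarter_linear_le_square[OF _ small(2)]
    odd_quarter_linear_le_square[OF _ small(3)]
  show ?thesis
    using u unfolding L2_coords_def lattice_coords_def W_coords_def
  proof (elim disjE conjE)
    assume "u1 \<in> \<int>" "u2 \<in> \<int>" "u3 \<in> \<int>"
    from I(1)[OF this(1)] I(2)[OF this(2)] I(3)[OF this(3)] show ?thesis by argo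
  next
    assume "half_int u1" "half_int u2" "half_int u3"
    from H(1)[OF this(1)] H(2)[OF this(2)] H(3)[OF this(3)] pairs(1) pairs(4) pairs(5) show ?thesis by argo
  next
    assume "u1 \<in> \<int>" "half_int u2" "odd_quarter u3"
    from I(1)[OF this(1)] H(2)[OF this(2)] Q(3)[OF this(3)] pairs(4) show ?thesis by argo
  next
    assume "u1 \<in> \<int>" "odd_quarter u2" "half_int u3"
    from I(1)[OF this(1)] Q(2)[OF this(2)] H(3)[OF this(3)] pairs(6) show ?thesis by argo
  next
    assume "half_int u1" "u2 \<in> \<int>" "odd_quarter u3"
    from H(1)[OF this(1)] I(2)[OF this(2)] Q(3)[OF this(3)] pairs(2) show ?thesis by argo
  next
    assume "half_int u1" "odd_quarter u2" "u3 \<in> \<int>"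
    from H(1)[OF this(1)] Q(2)[OF this(2)] I(3)[OF this(3)] pairs(1) show ?thesis by argo
  next
    assume "odd_quarter u1" "u2 \<in> \<int>" "half_int u3"
    from Q(1)[OF this(1)] I(2)[OF this(2)] H(3)[OF this(3)] pairs(5) show ?thesis by argo
  next
    assume "odd_quarter u1" "half_int u2" "u3 \<in> \<int>"
    from Q(1)[OF this(1)] H(2)[OF this(2)] I(3)[OF this(3)] pairs(3) show ?thesis by argo
  qed
qed

lemma tetrakis_halfspaces_subset_voronoi_cell:
  assumes "a > 0"
  shows "tetrakis_halfspaces a \<subseteq> voronoi_cell (L2 a) 0"
proof
  fix x assume x: "x \<in> tetrakis_halfspaces a"
  define c where "c = x /\<^sub>R a"
  have x_eq: "x = a *\<^sub>R c" using assms by (simp add: c_def)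
  have c_abs: "\<bar>c$i\<bar> = \<bar>x$i\<bar> / a" for i
    using assms by (simp add: c_def abs_mult divide_inverse_commute)
  have "c \<in> tetrakis_halfspaces 1"
    unfolding tetrakis_halfspaces_def mem_Collect_eq c_abs
  proof (intro allI impI)
    fix i j :: 3 assume "i \<noteq> j"
    then have "2 * \<bar>x$i\<bar> + \<bar>x$j\<bar> \<le> 5*a/8" using x unfolding tetrakis_halfspaces_def by blast
    then show "2 * (\<bar>x$i\<bar> / a) + \<bar>x$j\<bar> / a \<le> 5*1/8"
      using assms by (simp add: field_simps)
  qed
  then have c3: "pt3 (c$1) (c$2) (c$3) \<in> tetrakis_halfspaces 1"
    by (simp flip: pt3_components)
  show "x \<in> voronoi_cell (L2 a) 0"
    unfolding mem_voronoi_cell_0_iff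
  proof
    fix q assume "q \<in> L2 a"
    then obtain u1 u2 u3 where q: "q = a *\<^sub>R pt3 u1 u2 u3" and u: "L2_coords u1 u2 u3"
      unfolding L2_eq by blast
    have "a^2 * (2 * (c$1*u1 + c$2*u2 + c$3*u3)) \<le> a^2 * (u1^2 + u2^2 + u3^2)"
      using L2_coords_inner_le[OF u c3] by (rule mult_left_mono) simp
    then show "2 * (q \<bullet> x) \<le> q \<bullet> q"
      by (simp add: q x_eq inner_vec3 algebra_simps power2_eq_square)
  qed
qed

lemma abs_add_abs_le_of_sign_bounds:
  fixes y z B :: real
  assumes "\<And>s t. s \<in> {-1, 1} \<Longrightarrow> t \<in> {-1, 1} \<Longrightarrow> s * y + t * z \<le> B"
  shows "\<bar>y\<bar> + \<bar>z\<bar> \<le> B"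
  using assms[of 1 1] assms[of 1 "-1"] assms[of "-1" 1] assms[of "-1" "-1"]
  by (cases "y \<ge> 0"; cases "z \<ge> 0") auto

lemma axis_vec3: "axis 1 c = pt3 c 0 0" "axis 2 c = pt3 0 c 0" "axis 3 c = pt3 0 0 c"
  by (simp_all add: vec_eq_iff forall_3 axis_def)

text \<open>The points \<open>(\<plusminus>a/2, \<plusminus>a/4, 0)\<close> of \<open>W\<close> and their permutations cut out the facets
  of the Voronoi cell.\<close>
lemma facet_points_in_L2:
  assumes "i \<noteq> j" "s \<in> {-1, 1}" "t \<in> {-1, 1}"
  shows "a *\<^sub>R (axis i (s/2) + axis j (t/4)) \<in> L2 a"
proof -
  have "half_int (s/2)" "odd_quarter (t/4)"
    using assms(2,3) by (auto simp: half_int_def odd_quarter_def)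
  then have "L2_coords (s/2) (t/4) 0" "L2_coords (s/2) 0 (t/4)" "L2_coords (t/4) (s/2) 0"
    "L2_coords 0 (s/2) (t/4)" "L2_coords (t/4) 0 (s/2)" "L2_coords 0 (t/4) (s/2)"
    unfolding L2_coords_def W_coords_def by simp_all
  moreover have "(i, j) \<in> {(1,2), (1,3), (2,1), (2,3), (3,1), (3,2)}"
    using assms(1) exhaust_3[of i] exhaust_3[of j] by auto
  ultimately have "\<exists>u1 u2 u3. axis i (s/2) + axis j (t/4) = pt3 u1 u2 u3 \<and> L2_coords u1 u2 u3"
    by (auto simp: axis_vec3 simp del: pt3_inject; blast)
  then obtain u1 u2 u3 where u: "axis i (s/2) + axis j (t/4) = pt3 u1 u2 u3" "L2_coords u1 u2 u3"
    by blast
  show ?thesis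
    unfolding L2_eq u(1) using u(2) by blast
qed

lemma voronoi_cell_subset_tetrakis_halfspaces:
  assumes a: "a > 0"
  shows "voronoi_cell (L2 a) 0 \<subseteq> tetrakis_halfspaces a"
proof
  fix x assume x: "x \<in> voronoi_cell (L2 a) 0"
  have "2 * \<bar>x$i\<bar> + \<bar>x$j\<bar> \<le> 5*a/8" if ij: "i \<noteq> j" for i j
  proof -
    have "s * (2 * x$i) + t * x$j \<le> 5*a/8" if st: "s \<in> {-1, 1}" "t \<in> {-1, 1}" for s t
    proof -
      let ?q = "a *\<^sub>R (axis i (s/2) + axis j (t/4))"
      have le: "2 * (?q \<bullet> x) \<le> ?q \<bullet> ?q"
        using x facet_points_in_L2[OF ij st] unfolding mem_voronoi_cell_0_iff by blast
      have qx: "?q \<bullet> x = a * (s/2 * x$i + t/4 * x$j)"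
        by (simp add: inner_add_left inner_axis' algebra_simps)
      have qq: "?q \<bullet> ?q = a * (a * ((s/2)^2 + (t/4)^2))"
        using ij by (simp add: inner_add_left inner_add_right inner_axis_axis power2_eq_square
            algebra_simps)
      have st2: "(s/2)^2 + (t/4)^2 = 5/16"
        using st by (auto simp: power2_eq_square)
      have "a * (2 * (s/2 * x$i + t/4 * x$j)) \<le> a * (a * (5/16))"
        using le unfolding qx qq st2 by (simp only: mult.left_commute)
      then have "2 * (s/2 * x$i + t/4 * x$j) \<le> a * (5/16)"
        using a by (rule mult_left_le_imp_le)
      then show ?thesis by (simp add: algebra_simps)
    qed
    then have "\<bar>2 * x$i\<bar> + \<bar>x$j\<bar> \<le> 5*a/8"
      by (rule abs_add_abs_le_of_sign_bounds)
    then show ?thesis by (simp add: abs_mult)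
  qed
  then show "x \<in> tetrakis_halfspaces a"
    unfolding tetrakis_halfspaces_def by blast
qed

section \<open>The tetrakis hexahedron\<close>

definition signed_perm :: "('n \<Rightarrow> 'n) \<Rightarrow> real \<Rightarrow> real^'n \<Rightarrow> real^'n" where
  "signed_perm \<sigma> s x = (\<chi> i. s * x $ \<sigma> i)"

lemma signed_perm_nth [simp]: "signed_perm \<sigma> s x $ i = s * x $ \<sigma> i"
  by (simp add: signed_perm_def)

lemma linear_signed_perm: "linear (signed_perm \<sigma> s)"
  by (rule linearI) (simp_all add: vec_eq_iff algebra_simps)

lemma inner_signed_perm:
  assumes "bij \<sigma>" "\<bar>s\<bar> = 1"
  shows "signed_perm \<sigma> s v \<bullet> signed_perm \<sigma> s w = v \<bullet> w"
proof -
  have "s = 1 \<or> s = -1" using assms(2) by auto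
  then have "signed_perm \<sigma> s v \<bullet> signed_perm \<sigma> s w = (\<Sum>i\<in>UNIV. v $ \<sigma> i * w $ \<sigma> i)"
    by (elim disjE) (simp_all add: inner_vec_def)
  also have "\<dots> = v \<bullet> w"
    unfolding inner_vec_def inner_real_def
    using sum.reindex_bij_betw[OF assms(1), of "\<lambda>i. v $ i * w $ i"] by simp
  finally show ?thesis .
qed

lemma orthogonal_transformation_signed_perm:
  "bij \<sigma> \<Longrightarrow> \<bar>s\<bar> = 1 \<Longrightarrow> orthogonal_transformation (signed_perm \<sigma> s)"
  unfolding orthogonal_transformation_def using linear_signed_perm inner_signed_perm by blast

lemma signed_perm_involution:
  assumes "\<And>i. \<sigma> (\<sigma> i) = i" "\<bar>s\<bar> = 1"
  shows "signed_perm \<sigma> s (signed_perm \<sigma> s x) = x"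
proof -
  have "s = 1 \<or> s = -1" using assms(2) by auto
  then show ?thesis by (elim disjE) (simp_all add: vec_eq_iff assms(1))
qed

lemma tetrakis_halfspaces_signed_perm:
  assumes "inj \<sigma>" "\<bar>s\<bar> = 1" "x \<in> tetrakis_halfspaces a"
  shows "signed_perm \<sigma> s x \<in> tetrakis_halfspaces a"
  using assms unfolding tetrakis_halfspaces_def inj_def by (auto simp: abs_mult)

lemma cube_vertices_eq:
  assumes "a > 0"
  shows "cube_vertices a = {v. \<forall>i. \<bar>v$i\<bar> = 5*a/24}"
proof (intro set_eqI iffI)
  fix v :: "real^3" assume "v \<in> cube_vertices a"
  then show "v \<in> {v. \<forall>i. \<bar>v$i\<bar> = 5*a/24}"
    using assms unfolding cube_vertices_def by (auto simp: forall_3 abs_mult)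
next
  fix v :: "real^3" assume v: "v \<in> {v. \<forall>i. \<bar>v$i\<bar> = 5*a/24}"
  have "\<exists>s\<in>{-1,1}. v$i = s * (5*a/24)" for i
  proof -
    have "\<bar>v$i\<bar> = 5*a/24" using v by simp
    then show ?thesis by (cases "v$i \<ge> 0") auto
  qed
  then obtain s1 s2 s3 where s: "s1 \<in> {-1,1}" "s2 \<in> {-1,1}" "s3 \<in> {-1,1}"
    and "v$1 = s1 * (5*a/24)" "v$2 = s2 * (5*a/24)" "v$3 = s3 * (5*a/24)"
    by meson
  then have "v = pt3 (s1 * (5*a/24)) (s2 * (5*a/24)) (s3 * (5*a/24))"
    by (subst pt3_components) simp
  with s show "v \<in> cube_vertices a"
    unfolding cube_vertices_def by blast
qed

lemma cube_vertices_signed_perm: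
  assumes "a > 0" "\<bar>s\<bar> = 1" "v \<in> cube_vertices a"
  shows "signed_perm \<sigma> s v \<in> cube_vertices a"
  using assms by (simp add: cube_vertices_eq abs_mult)

lemma pyramid_signed_perm:
  assumes "a > 0" "bij \<sigma>" "\<bar>s\<bar> = 1"
  shows "signed_perm \<sigma> s ` pyramid a c \<subseteq> pyramid a (signed_perm \<sigma> s c)"
proof -
  have "signed_perm \<sigma> s ` pyramid a c
      = convex hull (signed_perm \<sigma> s ` insert c {v \<in> cube_vertices a. v \<bullet> c > 0})"
    unfolding pyramid_def by (rule convex_hull_linear_image[OF linear_signed_perm])
  also have "\<dots> \<subseteq> pyramid a (signed_perm \<sigma> s c)"
    unfolding pyramid_def
    by (rule hull_mono) (auto simp: cube_vertices_signed_perm assms inner_signed_perm)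
  finally show ?thesis .
qed

lemma convex_mem_of_coord_endpoints:
  fixes S :: "(real^'n) set"
  assumes S: "convex S" and b: "b > 0" and x: "\<bar>x$k\<bar> \<le> b"
    and lo: "(\<chi> i. if i = k then -b else x$i) \<in> S" and hi: "(\<chi> i. if i = k then b else x$i) \<in> S"
  shows "x \<in> S"
proof -
  define \<theta> where "\<theta> = (x$k + b) / (2*b)"
  have \<theta>: "0 \<le> \<theta>" "\<theta> \<le> 1" using b x by (auto simp: \<theta>_def field_simps)
  have "x = (1 - \<theta>) *\<^sub>R (\<chi> i. if i = k then -b else x$i) + \<theta> *\<^sub>R (\<chi> i. if i = k then b else x$i)"
    using b by (simp add: vec_eq_iff \<theta>_def field_simps)
  also have "\<dots> \<in> S" using \<theta> by (intro convexD[OF S lo hi]) simp_all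
  finally show ?thesis .
qed

lemma convex_coord_box_mem:
  fixes S :: "(real^'n) set"
  assumes S: "convex S" and b: "b > 0"
    and corners: "\<And>v. (\<forall>i\<in>K. \<bar>v$i\<bar> = b) \<Longrightarrow> (\<forall>i. i \<notin> K \<longrightarrow> v$i = x$i) \<Longrightarrow> v \<in> S"
    and x: "\<forall>i\<in>K. \<bar>x$i\<bar> \<le> b"
  shows "x \<in> S"
proof -
  have "finite K" by simp
  then show ?thesis using corners x
  proof (induction K arbitrary: x rule: finite_induct)
    case empty
    then show ?case by simp
  next
    case (insert k K)
    have endpoint: "(\<chi> i. if i = k then c else x$i) \<in> S" if c: "\<bar>c\<bar> = b" for c
    proof (rule insert.IH)
      fix v :: "real^'n"
      assume vK: "\<forall>i\<in>K. \<bar>v$i\<bar> = b" and voff: "\<forall>i. i \<notin> K \<longrightarrow> v$i = (\<chi> i. if i = k then c else x$i) $ i"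
      have "\<bar>v$k\<bar> = b" using voff insert.hyps(2) c by simp
      with vK voff show "v \<in> S" by (intro insert.prems(1)) auto
    next
      show "\<forall>i\<in>K. \<bar>(\<chi> i. if i = k then c else x$i) $ i\<bar> \<le> b"
        using insert.prems(2) insert.hyps(2) by auto
    qed
    show ?case
      by (rule convex_mem_of_coord_endpoints[OF S b _ endpoint endpoint]) (use insert.prems b in auto)
  qed
qed

lemma central_cube_subset_hull_vertices:
  assumes "a > 0"
  shows "central_cube a \<subseteq> convex hull (cube_vertices a)"
proof
  fix x assume "x \<in> central_cube a"
  then have x: "\<forall>i\<in>UNIV. \<bar>x$i\<bar> \<le> 5*a/24" by (simp add: central_cube_def)
  show "x \<in> convex hull (cube_vertices a)"
  proof (rule convex_coord_box_mem[OF convex_convex_hull _ _ x])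
    show "5*a/24 > 0" using assms by simp
  next
    fix v :: "real^3" assume "\<forall>i\<in>UNIV. \<bar>v$i\<bar> = 5*a/24"
    then have "v \<in> cube_vertices a" using assms by (simp add: cube_vertices_eq)
    then show "v \<in> convex hull (cube_vertices a)" by (rule hull_inc)
  qed
qed

lemma pyramid_base_mem:
  assumes "a > 0" "\<bar>w2\<bar> \<le> 5*a/24" "\<bar>w3\<bar> \<le> 5*a/24"
  shows "pt3 (5*a/24) w2 w3 \<in> pyramid a (pt3 (5*a/16) 0 0)"
proof (rule convex_coord_box_mem[of _ "5*a/24" "{2, 3}"])
  show "convex (pyramid a (pt3 (5*a/16) 0 0))" unfolding pyramid_def by simp
  show "5*a/24 > 0" using assms by simp
next
  fix v :: "real^3"
  assume "\<forall>i\<in>{2, 3}. \<bar>v$i\<bar> = 5*a/24" "\<forall>i. i \<notin> {2, 3} \<longrightarrow> v$i = pt3 (5*a/24) w2 w3 $ i"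
  then have "v \<in> cube_vertices a" "v \<bullet> pt3 (5*a/16) 0 0 > 0"
    using assms by (auto simp: cube_vertices_eq forall_3 inner_vec3)
  then show "v \<in> pyramid a (pt3 (5*a/16) 0 0)" unfolding pyramid_def by (intro hull_inc) simp
qed (use assms in auto)

lemma tetrakis_halfspaces_mem_pyramid:
  assumes a: "a > 0" and y: "y \<in> tetrakis_halfspaces a" and y1: "y$1 \<ge> 5*a/24"
  shows "y \<in> pyramid a (pt3 (5*a/16) 0 0)"
proof -
  define b where "b = 5*a/24"
  have b: "b > 0" using a by (simp add: b_def)
  define c where "c = pt3 (3*b/2) 0 0"
  have c_eq: "pt3 (5*a/16) 0 0 = c" by (simp add: b_def c_def)
  let ?S = "pyramid a c"
  have S: "convex ?S" unfolding pyramid_def by simp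
  have apex: "c \<in> ?S" unfolding pyramid_def by (rule hull_inc) simp
  have face: "pt3 b w2 w3 \<in> ?S" if "\<bar>w2\<bar> \<le> b" "\<bar>w3\<bar> \<le> b" for w2 w3
    using pyramid_base_mem[OF a, of w2 w3] that c_eq by (simp add: b_def)
  have h: "2 * y$1 + \<bar>y$2\<bar> \<le> 3*b" "2 * y$1 + \<bar>y$3\<bar> \<le> 3*b"
    using y y1 a unfolding mem_tetrakis_halfspaces_iff b_def by auto
  show ?thesis
  proof (cases "y$1 = 3*b/2")
    case True
    then have "\<bar>y$2\<bar> \<le> 0" "\<bar>y$3\<bar> \<le> 0" using h by linarith+
    then have "y = c" using True by (subst pt3_components) (simp add: c_def)
    then show ?thesis using apex c_eq by simp
  next
    case False
    \<comment> \<open>\<open>y\<close> is the convex combination of the apex and a point \<open>w\<close> of the base with weight \<open>t\<close>\<close>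
    define t where "t = (2 * y$1 - 2*b) / b"
    have t: "0 \<le> t" "t < 1" using y1 h False b by (auto simp: t_def b_def field_simps)
    define w where "w = pt3 b (y$2 / (1 - t)) (y$3 / (1 - t))"
    have "(1 - t) * b = 3*b - 2 * y$1" using b by (simp add: t_def field_simps)
    then have "\<bar>y$2 / (1 - t)\<bar> \<le> b" "\<bar>y$3 / (1 - t)\<bar> \<le> b"
      using h t by (simp_all add: abs_divide pos_divide_le_eq mult.commute)
    then have "w \<in> ?S" unfolding w_def by (rule face)
    then have "(1 - t) *\<^sub>R w + t *\<^sub>R c \<in> ?S" using t by (intro convexD[OF S _ apex]) simp_all
    moreover have "(1 - t) *\<^sub>R w + t *\<^sub>R c = y"
      using t b by (subst (2) pt3_components) (simp add: w_def c_def t_def field_simps)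
    ultimately show ?thesis using c_eq by simp
  qed
qed

lemma bij_transpose: "bij (Transposition.transpose i j)"
  by (simp add: bij_def)

lemma apex_signed_perm:
  assumes "s \<in> {-1, 1}"
  shows "signed_perm (Transposition.transpose 1 j) s (pt3 (5*a/16) 0 0) \<in> apex_vertices a"
proof -
  have "j = 1 \<or> j = 2 \<or> j = 3" by (rule exhaust_3)
  then show ?thesis
    using assms unfolding apex_vertices_def
    by (auto simp: vec_eq_iff forall_3 Transposition.transpose_def)
qed

lemma tetrakis_halfspaces_subset_cube_Un_pyramids:
  assumes a: "a > 0"
  shows "tetrakis_halfspaces a \<subseteq> central_cube a \<union> (\<Union>c\<in>apex_vertices a. pyramid a c)"
proof
  fix x assume x: "x \<in> tetrakis_halfspaces a"
  show "x \<in> central_cube a \<union> (\<Union>c\<in>apex_vertices a. pyramid a c)"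
  proof (cases "x \<in> central_cube a")
    case False
    \<comment> \<open>move the coordinate leaving the cube to the first position, with positive sign\<close>
    then obtain j where j: "\<bar>x$j\<bar> > 5*a/24" unfolding central_cube_def by (auto simp: not_le)
    define s :: real where "s = (if x$j \<ge> 0 then 1 else -1)"
    define f where "f = signed_perm (Transposition.transpose 1 j) s"
    have s: "\<bar>s\<bar> = 1" "s \<in> {-1, 1}" by (auto simp: s_def)
    have ff: "f (f y) = y" for y
      unfolding f_def by (rule signed_perm_involution[OF _ s(1)]) simp
    have "f x \<in> tetrakis_halfspaces a"
      unfolding f_def by (rule tetrakis_halfspaces_signed_perm[OF bij_is_inj[OF bij_transpose] s(1) x])
    moreover have "f x $ 1 = \<bar>x$j\<bar>" by (simp add: f_def s_def)
    ultimately have "f x \<in> pyramid a (pt3 (5*a/16) 0 0)"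
      using tetrakis_halfspaces_mem_pyramid[OF a] j by simp
    then have "f (f x) \<in> f ` pyramid a (pt3 (5*a/16) 0 0)" by (rule imageI)
    also have "\<dots> \<subseteq> pyramid a (f (pt3 (5*a/16) 0 0))"
      unfolding f_def by (rule pyramid_signed_perm[OF a bij_transpose s(1)])
    finally have "x \<in> pyramid a (f (pt3 (5*a/16) 0 0))" by (simp only: ff)
    moreover have "f (pt3 (5*a/16) 0 0) \<in> apex_vertices a"
      unfolding f_def by (rule apex_signed_perm[OF s(2)])
    ultimately show ?thesis by blast
  qed simp
qed

lemma cube_Un_pyramids_subset_tetrakis:
  assumes "a > 0"
  shows "central_cube a \<union> (\<Union>c\<in>apex_vertices a. pyramid a c) \<subseteq> tetrakis a"
proof -
  have "central_cube a \<subseteq> tetrakis a"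
    using central_cube_subset_hull_vertices[OF assms] hull_mono[of "cube_vertices a"]
    unfolding tetrakis_def by blast
  moreover have "pyramid a c \<subseteq> tetrakis a" if "c \<in> apex_vertices a" for c
    unfolding pyramid_def tetrakis_def by (rule hull_mono) (use that in auto)
  ultimately show ?thesis by blast
qed

lemma vertices_subset_tetrakis_halfspaces:
  assumes "a > 0"
  shows "cube_vertices a \<union> apex_vertices a \<subseteq> tetrakis_halfspaces a"
  using assms unfolding cube_vertices_def apex_vertices_def
  by (auto simp: mem_tetrakis_halfspaces_iff abs_mult)

lemma tetrakis_subset_voronoi_cell:
  assumes "a > 0"
  shows "tetrakis a \<subseteq> voronoi_cell (L2 a) 0"
  unfolding tetrakis_def
  using vertices_subset_tetrakis_halfspaces[OF assms] tetrakis_halfspaces_subset_voronoi_cell[OF assms]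
  by (intro hull_minimal convex_voronoi_cell) blast

text \<open>The four inclusions close up into a cycle.\<close>
lemma tetrakis_eqs:
  assumes "a > 0"
  shows "voronoi_cell (L2 a) 0 = tetrakis a" "tetrakis a = tetrakis_halfspaces a"
    "tetrakis a = central_cube a \<union> (\<Union>c\<in>apex_vertices a. pyramid a c)"
  using voronoi_cell_subset_tetrakis_halfspaces[OF assms] tetrakis_halfspaces_subset_cube_Un_pyramids[OF assms]
    cube_Un_pyramids_subset_tetrakis[OF assms] tetrakis_subset_voronoi_cell[OF assms]
  by blast+

section \<open>Volume\<close>

definition dominant_cone :: "'n::finite \<Rightarrow> real \<Rightarrow> (real^'n) set" where
  "dominant_cone j s = {x. \<forall>i. \<bar>x$i\<bar> \<le> s * x$j}"

lemma closed_dominant_cone: "closed (dominant_cone (j::'n::finite) s)"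
proof -
  have "dominant_cone j s = (\<Inter>i. {x. \<bar>x$i\<bar> \<le> s * x$j})"
    unfolding dominant_cone_def by auto
  moreover have "closed {x::real^'n. \<bar>x$i\<bar> \<le> s * x$j}" for i
    by (intro closed_Collect_le continuous_intros)
  ultimately show ?thesis by auto
qed

lemma signed_transpose_mem_dominant_cone_iff:
  assumes "\<bar>s\<bar> = 1"
  shows "signed_perm (Transposition.transpose k j) s x \<in> dominant_cone k 1 \<longleftrightarrow> x \<in> dominant_cone j s"
proof -
  have "signed_perm (Transposition.transpose k j) s x \<in> dominant_cone k 1
      \<longleftrightarrow> (\<forall>i. \<bar>x $ Transposition.transpose k j i\<bar> \<le> s * x$j)"
    unfolding dominant_cone_def using assms by (simp add: abs_mult)
  also have "\<dots> \<longleftrightarrow> (\<forall>i. \<bar>x$i\<bar> \<le> s * x$j)"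
    by (metis transpose_involutory)
  finally show ?thesis unfolding dominant_cone_def by simp
qed

lemma dominant_cone_cover:
  fixes x :: "real^'n"
  shows "\<exists>j. \<exists>s\<in>{-1, 1}. x \<in> dominant_cone j s"
proof -
  have fin: "finite (range (\<lambda>i. \<bar>x$i\<bar>))" by simp
  have "Max (range (\<lambda>i. \<bar>x$i\<bar>)) \<in> range (\<lambda>i. \<bar>x$i\<bar>)"
    using fin by (rule Max_in) simp
  then obtain j where "Max (range (\<lambda>i. \<bar>x$i\<bar>)) = \<bar>x$j\<bar>" by blast
  then have j: "\<forall>i. \<bar>x$i\<bar> \<le> \<bar>x$j\<bar>" using Max_ge[OF fin] by auto
  define s :: real where "s = (if x$j \<ge> 0 then 1 else -1)"
  have "s * x$j = \<bar>x$j\<bar>" by (simp add: s_def)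
  then have "x \<in> dominant_cone j s" using j unfolding dominant_cone_def by simp
  moreover have "s \<in> {-1, 1}" by (simp add: s_def)
  ultimately show ?thesis by blast
qed

lemma negligible_dominant_cone_Int:
  fixes j j' :: "'n::finite"
  assumes "s \<in> {-1, 1}" "s' \<in> {-1, 1}" "(j, s) \<noteq> (j', s')"
  shows "negligible (dominant_cone j s \<inter> dominant_cone j' s')"
proof -
  define w :: "real^'n" where "w = axis j s - axis j' s'"
  have "w \<noteq> 0"
  proof
    assume "w = 0"
    then have "w $ j = 0" by simp
    then show False using assms unfolding w_def by (auto simp: axis_def split: if_splits)
  qed
  then have "negligible {x. w \<bullet> x = 0}" by (intro negligible_hyperplane) simp
  moreover have "dominant_cone j s \<inter> dominant_cone j' s' \<subseteq> {x. w \<bullet> x = 0}"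
  proof
    fix x assume "x \<in> dominant_cone j s \<inter> dominant_cone j' s'"
    then have "\<bar>x$j'\<bar> \<le> s * x$j" "\<bar>x$j\<bar> \<le> s' * x$j'" unfolding dominant_cone_def by auto
    moreover have "s * x$j \<le> \<bar>x$j\<bar>" "s' * x$j' \<le> \<bar>x$j'\<bar>" using assms by auto
    ultimately have "s * x$j = s' * x$j'" by linarith
    then show "x \<in> {x. w \<bullet> x = 0}" by (simp add: w_def inner_diff_left inner_axis' mult.commute)
  qed
  ultimately show ?thesis by (rule negligible_subset)
qed

lemma measure_eq_sum_dominant_cones:
  fixes S :: "(real^'n::finite) set"
  assumes S: "compact S"
  shows "measure lebesgue S = (\<Sum>(j, s)\<in>UNIV \<times> {1, -1}. measure lebesgue (S \<inter> dominant_cone j s))"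
proof -
  define I where "I = (UNIV :: 'n set) \<times> {1::real, -1}"
  define piece where "piece = (\<lambda>(j, s). S \<inter> dominant_cone j s)"
  have meas: "piece p \<in> lmeasurable" for p
    unfolding piece_def
    by (cases p) (auto intro!: lmeasurable_compact compact_Int_closed closed_dominant_cone S)
  have "\<Union>(piece ` I) = S"
  proof
    show "\<Union>(piece ` I) \<subseteq> S" by (auto simp: piece_def)
    show "S \<subseteq> \<Union>(piece ` I)"
    proof
      fix x assume "x \<in> S"
      moreover obtain j s where "s \<in> {-1, 1}" "x \<in> dominant_cone j s"
        using dominant_cone_cover by blast
      ultimately have "(j, s) \<in> I" "x \<in> piece (j, s)" by (auto simp: I_def piece_def)
      then show "x \<in> \<Union>(piece ` I)" by blast
    qed
  qed
  moreover have "pairwise (\<lambda>p q. negligible (piece p \<inter> piece q)) I"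
  proof (rule pairwiseI)
    fix p q assume "p \<in> I" "q \<in> I" "p \<noteq> q"
    moreover obtain j s j' s' where "p = (j, s)" "q = (j', s')" by fastforce
    ultimately have "negligible (dominant_cone j s \<inter> dominant_cone j' s')"
      by (intro negligible_dominant_cone_Int) (auto simp: I_def)
    then show "negligible (piece p \<inter> piece q)"
      by (rule negligible_subset) (auto simp: piece_def \<open>p = (j, s)\<close> \<open>q = (j', s')\<close>)
  qed
  ultimately show ?thesis
    using measure_negligible_finite_Union_image[of I piece] meas by (simp add: I_def piece_def split_def)
qed

lemma dominant_cone_Int_eq_signed_transpose_image:
  assumes inv: "\<And>x. x \<in> S \<Longrightarrow> signed_perm (Transposition.transpose k j) s x \<in> S"
    and s: "\<bar>s\<bar> = 1"
  shows "S \<inter> dominant_cone j s = signed_perm (Transposition.transpose k j) s ` (S \<inter> dominant_cone k 1)"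
    (is "_ = ?f ` _")
proof -
  have ff: "?f (?f x) = x" for x by (rule signed_perm_involution[OF _ s]) simp
  show ?thesis
  proof (intro set_eqI iffI)
    fix x assume "x \<in> S \<inter> dominant_cone j s"
    then have "?f x \<in> S \<inter> dominant_cone k 1"
      using inv signed_transpose_mem_dominant_cone_iff[OF s, of k j x] by simp
    then show "x \<in> ?f ` (S \<inter> dominant_cone k 1)" by (metis ff image_eqI)
  next
    fix x assume "x \<in> ?f ` (S \<inter> dominant_cone k 1)"
    then obtain y where "y \<in> S" "y \<in> dominant_cone k 1" "x = ?f y" by blast
    then show "x \<in> S \<inter> dominant_cone j s"
      using inv signed_transpose_mem_dominant_cone_iff[OF s, of k j x] ff by auto
  qed
qed

text \<open>The \<open>2n\<close> cones \<open>dominant_cone j s\<close> tile \<open>\<real>\<^sup>n\<close> up to null sets and are permuted by the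
  signed transpositions, so a set invariant under these isometries has \<open>2n\<close> times the measure
  of its part in one cone.\<close>
lemma measure_eq_card_dominant_cone:
  fixes S :: "(real^'n::{finite,wellorder}) set"
  assumes S: "compact S"
    and inv: "\<And>j s x. \<bar>s\<bar> = 1 \<Longrightarrow> x \<in> S \<Longrightarrow> signed_perm (Transposition.transpose k j) s x \<in> S"
  shows "measure lebesgue S = 2 * CARD('n) * measure lebesgue (S \<inter> dominant_cone k 1)"
proof -
  have meas: "S \<inter> dominant_cone k 1 \<in> lmeasurable"
    by (intro lmeasurable_compact compact_Int_closed closed_dominant_cone S)
  have each: "measure lebesgue (S \<inter> dominant_cone j s) = measure lebesgue (S \<inter> dominant_cone k 1)"
    if "s \<in> {1, -1}" for j s
  proof -
    have s: "\<bar>s\<bar> = 1" using that by auto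
    have "S \<inter> dominant_cone j s = signed_perm (Transposition.transpose k j) s ` (S \<inter> dominant_cone k 1)"
      using inv[OF s] s by (rule dominant_cone_Int_eq_signed_transpose_image)
    then show ?thesis
      using measure_orthogonal_image[OF orthogonal_transformation_signed_perm[OF bij_transpose s] meas]
      by simp
  qed
  have "measure lebesgue S = (\<Sum>p\<in>(UNIV::'n set) \<times> {1::real, -1}. measure lebesgue (S \<inter> dominant_cone k 1))"
    unfolding measure_eq_sum_dominant_cones[OF S] by (rule sum.cong[OF refl]) (auto intro!: each)
  also have "\<dots> = 2 * CARD('n) * measure lebesgue (S \<inter> dominant_cone k 1)"
    by (simp add: card_cartesian_product)
  finally show ?thesis .
qed

lemma prod_UNIV_3: "prod f (UNIV::3 set) = f 1 * f 2 * f 3"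
  unfolding UNIV_3 by (simp add: ac_simps)

lemma mem_cbox_minus_one_one: "x \<in> cbox (-1) (1::real^'n) \<longleftrightarrow> (\<forall>i. \<bar>x$i\<bar> \<le> 1)"
  by (auto simp: mem_box_cart abs_le_iff)

lemma measure_cbox_minus_one_one: "measure lebesgue (cbox (-1) (1::real^3)) = 8"
proof -
  have "measure lebesgue (cbox (-1) (1::real^3))
      = Henstock_Kurzweil_Integration.content (cbox (-1) (1::real^3))"
    by (metis cbox_borel measure_completion sets_lborel)
  moreover have "cbox (-1) (1::real^3) \<noteq> {}"
    using mem_cbox_minus_one_one[of "0::real^3"] by auto
  ultimately show ?thesis
    by (simp add: content_cbox_cart prod_UNIV_3)
qed

abbreviation unit_cone_piece :: "(real^3) set" where
  "unit_cone_piece \<equiv> cbox (-1) 1 \<inter> dominant_cone 1 1"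

lemma measure_unit_cone_piece: "measure lebesgue unit_cone_piece = 4/3"
proof -
  have "measure lebesgue (cbox (-1) (1::real^3)) = 2 * CARD(3) * measure lebesgue unit_cone_piece"
    by (rule measure_eq_card_dominant_cone) (simp_all add: mem_cbox_minus_one_one abs_mult)
  then show ?thesis by (simp add: measure_cbox_minus_one_one)
qed

lemma finite_cube_vertices: "finite (cube_vertices a)"
proof -
  have "cube_vertices a \<subseteq> (\<lambda>(s1, s2, s3). pt3 (s1 * (5*a/24)) (s2 * (5*a/24)) (s3 * (5*a/24)))
      ` ({-1, 1} \<times> {-1, 1} \<times> {-1, 1})"
  proof
    fix v assume "v \<in> cube_vertices a"
    then obtain s1 s2 s3 where "v = pt3 (s1 * (5*a/24)) (s2 * (5*a/24)) (s3 * (5*a/24))"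
      and "s1 \<in> {-1, 1}" "s2 \<in> {-1, 1}" "s3 \<in> {-1, 1}"
      unfolding cube_vertices_def by blast
    then show "v \<in> (\<lambda>(s1, s2, s3). pt3 (s1 * (5*a/24)) (s2 * (5*a/24)) (s3 * (5*a/24)))
      ` ({-1, 1} \<times> {-1, 1} \<times> {-1, 1})"
      by (intro image_eqI[of _ _ "(s1, s2, s3)"] SigmaI) simp_all
  qed
  then show ?thesis by (rule finite_subset) simp
qed

lemma compact_tetrakis: "compact (tetrakis a)"
  unfolding tetrakis_def
  by (intro finite_imp_compact_convex_hull) (simp add: finite_cube_vertices apex_vertices_def)

lemma stretch_unit_cone_piece:
  fixes b :: real
  assumes b: "b > 0"
  shows "(\<lambda>y. \<chi> k. b * y$k) ` unit_cone_piece = {x. (\<forall>i. \<bar>x$i\<bar> \<le> x$1) \<and> x$1 \<le> b}"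
proof (intro set_eqI iffI)
  fix x assume "x \<in> (\<lambda>y. \<chi> k. b * y$k) ` unit_cone_piece"
  then obtain y where "y \<in> unit_cone_piece" and x: "x = (\<chi> k. b * y$k)" by blast
  then have y: "\<forall>i. \<bar>y$i\<bar> \<le> 1" "\<forall>i. \<bar>y$i\<bar> \<le> y$1"
    by (simp_all add: mem_cbox_minus_one_one dominant_cone_def)
  have "\<bar>x$i\<bar> \<le> x$1" for i using y(2) b by (simp add: x abs_mult)
  moreover have "x$1 \<le> b" using y(1)[rule_format, of 1] b by (simp add: x abs_le_iff)
  ultimately show "x \<in> {x. (\<forall>i. \<bar>x$i\<bar> \<le> x$1) \<and> x$1 \<le> b}" by simp
next
  fix x :: "real^3" assume "x \<in> {x. (\<forall>i. \<bar>x$i\<bar> \<le> x$1) \<and> x$1 \<le> b}"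
  then have x: "\<forall>i. \<bar>x$i\<bar> \<le> x$1" "x$1 \<le> b" by auto
  define y :: "real^3" where "y = (\<chi> k. x$k / b)"
  have "x = (\<chi> k. b * y$k)" using b by (simp add: y_def vec_eq_iff)
  moreover have "y \<in> unit_cone_piece"
    unfolding mem_cbox_minus_one_one dominant_cone_def y_def Int_iff mem_Collect_eq
    using x b by (auto simp: abs_divide divide_le_eq intro: order_trans)
  ultimately show "x \<in> (\<lambda>y. \<chi> k. b * y$k) ` unit_cone_piece" by blast
qed

text \<open>The affine map sends the apex \<open>y = 0\<close> of the cone piece to \<open>(3b/2, 0, 0)\<close> and its base
  \<open>y\<^sub>1 = 1\<close> to the face \<open>x\<^sub>1 = b\<close> of the cube.\<close>
lemma pyramid_image_unit_cone_piece:
  fixes b :: real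
  assumes b: "b > 0"
  shows "(+) (pt3 (3*b/2) 0 0) ` ((\<lambda>y. \<chi> k. (if k = 1 then -b/2 else b) * y$k) ` unit_cone_piece)
     = {x. b \<le> x$1 \<and> \<bar>x$2\<bar> \<le> 3*b - 2 * x$1 \<and> \<bar>x$3\<bar> \<le> 3*b - 2 * x$1}"
    (is "?f ` (?g ` _) = ?P")
proof (intro set_eqI iffI)
  fix x assume "x \<in> ?f ` (?g ` unit_cone_piece)"
  then obtain y where "y \<in> unit_cone_piece" and x: "x = ?f (?g y)" by blast
  then have y: "\<forall>i. \<bar>y$i\<bar> \<le> 1" "\<forall>i. \<bar>y$i\<bar> \<le> y$1"
    by (simp_all add: mem_cbox_minus_one_one dominant_cone_def)
  have y1: "y$1 \<le> 1" "\<bar>y$2\<bar> \<le> y$1" "\<bar>y$3\<bar> \<le> y$1" using y by (auto simp: abs_le_iff)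
  have x1: "x$1 = 3*b/2 - b * y$1 / 2" "x$2 = b * y$2" "x$3 = b * y$3" by (simp_all add: x)
  have "b * \<bar>y$2\<bar> \<le> b * y$1" "b * \<bar>y$3\<bar> \<le> b * y$1" "b * y$1 \<le> b * 1"
    using y1 b by (intro mult_left_mono; simp)+
  moreover have "\<bar>x$2\<bar> = b * \<bar>y$2\<bar>" "\<bar>x$3\<bar> = b * \<bar>y$3\<bar>" using b by (simp_all add: x1 abs_mult)
  ultimately show "x \<in> ?P" unfolding mem_Collect_eq x1(1) by (simp add: field_simps)
next
  fix x :: "real^3" assume "x \<in> ?P"
  then have x: "b \<le> x$1" "\<bar>x$2\<bar> \<le> 3*b - 2 * x$1" "\<bar>x$3\<bar> \<le> 3*b - 2 * x$1" by auto
  define y where "y = pt3 ((3*b - 2 * x$1) / b) (x$2 / b) (x$3 / b)"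
  have "x = ?f (?g y)"
    using b by (simp add: y_def vec_eq_iff forall_3 field_simps)
  moreover have "y \<in> unit_cone_piece"
    unfolding mem_cbox_minus_one_one dominant_cone_def y_def Int_iff mem_Collect_eq
    using x b by (auto simp: forall_3 abs_divide divide_le_eq le_divide_eq)
  ultimately show "x \<in> ?f ` (?g ` unit_cone_piece)" by blast
qed

lemma tetrakis_halfspaces_Int_dominant_cone:
  assumes "a > 0"
  shows "tetrakis_halfspaces a \<inter> dominant_cone 1 1 = {x. (\<forall>i. \<bar>x$i\<bar> \<le> x$1) \<and> x$1 \<le> 5*a/24}
     \<union> {x. 5*a/24 \<le> x$1 \<and> \<bar>x$2\<bar> \<le> 3*(5*a/24) - 2 * x$1 \<and> \<bar>x$3\<bar> \<le> 3*(5*a/24) - 2 * x$1}"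
proof -
  have "x \<in> tetrakis_halfspaces a \<inter> dominant_cone 1 1 \<longleftrightarrow> x \<in> {x. (\<forall>i. \<bar>x$i\<bar> \<le> x$1) \<and> x$1 \<le> 5*a/24}
     \<union> {x. 5*a/24 \<le> x$1 \<and> \<bar>x$2\<bar> \<le> 3*(5*a/24) - 2 * x$1 \<and> \<bar>x$3\<bar> \<le> 3*(5*a/24) - 2 * x$1}"
    for x :: "real^3"
    unfolding Int_iff Un_iff mem_Collect_eq mem_tetrakis_halfspaces_iff dominant_cone_def
    using assms by (simp add: forall_3) arith
  then show ?thesis by blast
qed

lemma measure_tetrakis_halfspaces:
  assumes a: "a > 0"
  shows "measure lebesgue (tetrakis_halfspaces a) = 125 / 1152 * a ^ 3"
proof -
  define b where "b = 5*a/24"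
  have b: "b > 0" using a by (simp add: b_def)
  have Q: "unit_cone_piece \<in> lmeasurable"
    by (intro lmeasurable_compact compact_Int_closed closed_dominant_cone compact_cbox)
  define A where "A = (\<lambda>y. \<chi> k. b * y$k) ` unit_cone_piece"
  define B where "B = (+) (pt3 (3*b/2) 0 0) ` ((\<lambda>y. \<chi> k. (if k = 1 then -b/2 else b) * y$k) ` unit_cone_piece)"
  have cone_part: "tetrakis_halfspaces a \<inter> dominant_cone 1 1 = A \<union> B"
    unfolding A_def B_def stretch_unit_cone_piece[OF b] pyramid_image_unit_cone_piece[OF b]
    by (simp only: tetrakis_halfspaces_Int_dominant_cone[OF a] b_def)
  have A: "A \<in> lmeasurable" "measure lebesgue A = b^3 * (4/3)"
    unfolding A_def using measurable_stretch[OF Q] measure_stretch[OF Q, of "\<lambda>k. b"] b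
    by (simp_all add: measure_unit_cone_piece prod_UNIV_3 power3_eq_cube)
  have B: "B \<in> lmeasurable" "measure lebesgue B = b^3 / 2 * (4/3)"
    unfolding B_def using measurable_translation[OF measurable_stretch[OF Q]] b
      measure_stretch[OF Q, of "\<lambda>k. if k = 1 then -b/2 else b"]
    by (simp_all add: measure_translation measure_unit_cone_piece prod_UNIV_3 abs_mult power3_eq_cube)
  have "A \<inter> B \<subseteq> {x. axis 1 1 \<bullet> x = b}"
    unfolding A_def B_def stretch_unit_cone_piece[OF b] pyramid_image_unit_cone_piece[OF b]
    by (auto simp: inner_axis')
  then have "negligible (A \<inter> B)"
    by (rule negligible_subset[OF negligible_hyperplane, rotated]) (simp add: axis_eq_0_iff)
  then have "measure lebesgue (tetrakis_halfspaces a \<inter> dominant_cone 1 1) = 2 * b^3"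
    unfolding cone_part using measure_Un3[OF A(1) B(1)] A(2) B(2) negligible_imp_measure0 by simp
  moreover have "measure lebesgue (tetrakis_halfspaces a)
      = 2 * CARD(3) * measure lebesgue (tetrakis_halfspaces a \<inter> dominant_cone 1 1)"
  proof (rule measure_eq_card_dominant_cone)
    show "compact (tetrakis_halfspaces a)"
      using compact_tetrakis tetrakis_eqs(2)[OF a] by metis
  qed (rule tetrakis_halfspaces_signed_perm[OF bij_is_inj[OF bij_transpose]])
  ultimately show ?thesis by (simp add: b_def power3_eq_cube)
qed

theorem mainTheorem3:
  fixes a :: real
  assumes "a > 0"
  shows "voronoi_cell (L2 a) 0 = tetrakis a
    \<and> tetrakis a = central_cube a \<union> (\<Union>c\<in>apex_vertices a. pyramid a c)
    \<and> measure lebesgue (tetrakis a) = 125 / 1152 * a ^ 3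
    \<and> (\<forall>p \<in> cubic_lattice a \<union> shifted_lattice a.
          voronoi_cell (L2 a) p = (\<lambda>x. p + x) ` tetrakis a)"
proof (intro conjI ballI)
  show "voronoi_cell (L2 a) 0 = tetrakis a" by (rule tetrakis_eqs(1)[OF assms])
  show "tetrakis a = central_cube a \<union> (\<Union>c\<in>apex_vertices a. pyramid a c)"
    by (rule tetrakis_eqs(3)[OF assms])
  show "measure lebesgue (tetrakis a) = 125 / 1152 * a ^ 3"
    unfolding tetrakis_eqs(2)[OF assms] by (rule measure_tetrakis_halfspaces[OF assms])
next
  fix p assume p: "p \<in> cubic_lattice a \<union> shifted_lattice a"
  have "voronoi_cell (L2 a) p = (\<lambda>x. p + x) ` voronoi_cell (L2 a) 0"
  proof (rule voronoi_cell_translate)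
    fix q assume "q \<in> L2 a"
    then show "q + p \<in> L2 a" "q - p \<in> L2 a"
      using L2_add_lattice[OF p] L2_add_lattice[OF lattice_uminus[OF p]] by simp_all
  qed
  then show "voronoi_cell (L2 a) p = (\<lambda>x. p + x) ` tetrakis a"
    using tetrakis_eqs(1)[OF assms] by simp
qed

end
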